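(* Let $b_1$ and $b_2$ be slowly varying functions satisfying $\lim_{t\to0^+}b_i(t)\in(0,\infty)$ for $i=1,2$. Then the function $b$ defined for $t\in(0,\infty)$ by \[b(t)=\begin{cases} b_2\!\left(\frac1t-1\right) & t<1,\\ 1 & t=1,\\ b_1(t-1) & t>1,\end{cases}\] is also slowly varying and satisfies $b(t)\approx b_2(1/t)$ for $t\in(0,1)$ and $b\approx b_1$ on $(1,\infty)$.
   Context: A measurable function $b:(0,\infty)\to(0,\infty)$ is called slowly varying if for every $\varepsilon>0$ there exist a non-decreasing function $b_\varepsilon$ and a non-increasing function $b_{-\varepsilon}$ on $(0,\infty)$ such that $t^{\varepsilon}b(t)\approx b_\varepsilon(t)$ and $t^{-\varepsilon}b(t)\approx b_{-\varepsilon}(t)$ on $(0,\infty)$, where $f\approx g$ on a set $A$ means $C^{-1}g(t)\le f(t)\le Cg(t)$ for all $t\in A$, for some constant $C\ge1$ independent of $t$. *)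

theory Defs
  imports "HOL-Analysis.Analysis"
begin

definition equiv_on :: "(real \<Rightarrow> real) \<Rightarrow> (real \<Rightarrow> real) \<Rightarrow> real set \<Rightarrow> bool" where
  "equiv_on f g A \<longleftrightarrow> (\<exists>C\<ge>1. \<forall>t\<in>A. g t / C \<le> f t \<and> f t \<le> C * g t)"

definition slowly_varying :: "(real \<Rightarrow> real) \<Rightarrow> bool" where
  "slowly_varying b \<longleftrightarrow>
     b \<in> borel_measurable (restrict_space lborel {0<..}) \<and>
     (\<forall>t>0. b t > 0) \<and>
     (\<forall>\<epsilon>>0. \<exists>bp bm. mono_on {0<..} bp \<and> antimono_on {0<..} bm \<and>
         equiv_on (\<lambda>t. t powr \<epsilon> * b t) bp {0<..} \<and>
         equiv_on (\<lambda>t. t powr (-\<epsilon>) * b t) bm {0<..})"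

end

theory Submission
  imports Defs
begin

text \<open>
  A positive measurable \<open>f\<close> is slowly varying iff for every \<open>\<epsilon> > 0\<close> it satisfies the Potter bounds
  \<open>f s \<le> K (t/s)\<^sup>\<epsilon> f t\<close> and \<open>f t \<le> K (t/s)\<^sup>\<epsilon> f s\<close> for \<open>0 < s \<le> t\<close>: the monotone comparison
  functions of the definition give these bounds, and conversely the running suprema of
  \<open>t\<^sup>\<plusminus>\<^sup>\<epsilon> f t\<close> are monotone comparison functions. Unlike the definition, Potter bounds are
  evidently preserved under \<open>t \<mapsto> 1/t\<close>, under passing to an equivalent function, and under
  gluing bounds on \<open>(0, c]\<close> and \<open>[c, \<infinity>)\<close>.

  A slowly varying function with a positive limit at \<open>0\<close> is bounded above and below near \<open>0\<close>;
  together with the Potter bound for \<open>\<epsilon> = 1\<close> this gives \<open>b\<^sub>i (x - 1) \<approx> b\<^sub>i x\<close> on \<open>(1, \<infinity>)\<close>.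
  Hence \<open>b \<approx> b\<^sub>2 (1/t)\<close> on \<open>(0, 1]\<close> and \<open>b \<approx> b\<^sub>1\<close> on \<open>[1, \<infinity>)\<close>, and gluing the Potter bounds of
  these two functions at \<open>1\<close> shows that \<open>b\<close> is slowly varying.
\<close>

lemma equiv_on_iff_mult:
  "equiv_on f g A \<longleftrightarrow> (\<exists>C\<ge>1. \<forall>t\<in>A. f t \<le> C * g t \<and> g t \<le> C * f t)"
  unfolding equiv_on_def by (rule ex_cong1) (auto simp: pos_divide_le_eq mult.commute)

lemma equiv_on_pos:
  assumes "equiv_on g f A" "t \<in> A" "f t > 0"
  shows "g t > 0"
proof -
  obtain C where "C \<ge> 1" "f t / C \<le> g t"
    using assms unfolding equiv_on_def by blast
  with \<open>f t > 0\<close> show ?thesis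
    using divide_pos_pos[of "f t" C] by linarith
qed

lemma equiv_on_singleton:
  assumes "f a > 0" "g a > 0"
  shows "equiv_on f g {a}"
  unfolding equiv_on_iff_mult
proof (intro exI[of _ "max (f a / g a) (g a / f a)"] conjI ballI)
  show "1 \<le> max (f a / g a) (g a / f a)"
    using assms by (auto simp: le_max_iff_disj le_divide_eq_1)
  fix t assume "t \<in> {a}"
  have "f a = f a / g a * g a" "g a = g a / f a * f a"
    using assms by simp_all
  then show "f t \<le> max (f a / g a) (g a / f a) * g t" "g t \<le> max (f a / g a) (g a / f a) * f t"
    using \<open>t \<in> {a}\<close> assms
    by (metis less_eq_real_def max.cobounded1 max.cobounded2 mult_right_mono singletonD)+
qed

text \<open>Nonnegativity is needed: on points where \<open>g\<close> is negative only the constant \<open>C = 1\<close> works,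
  so the two constants could not be merged.\<close>
lemma equiv_on_Un:
  assumes "equiv_on f g A" "equiv_on f g B" and nonneg: "\<forall>t\<in>A \<union> B. g t \<ge> 0"
  shows "equiv_on f g (A \<union> B)"
proof -
  obtain C D where "C \<ge> 1" "D \<ge> 1"
    and C: "\<forall>t\<in>A. g t / C \<le> f t \<and> f t \<le> C * g t" and D: "\<forall>t\<in>B. g t / D \<le> f t \<and> f t \<le> D * g t"
    using assms(1,2) unfolding equiv_on_def by blast
  have "g t / max C D \<le> f t \<and> f t \<le> max C D * g t" if "t \<in> A \<union> B" for t
  proof (cases "t \<in> A")
    case True
    have "g t / max C D \<le> g t / C" "C * g t \<le> max C D * g t"
      using nonneg that \<open>C \<ge> 1\<close> by (auto intro!: divide_left_mono mult_right_mono)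
    with C True show ?thesis
      by fastforce
  next
    case False
    have "g t / max C D \<le> g t / D" "D * g t \<le> max C D * g t"
      using nonneg that \<open>D \<ge> 1\<close> by (auto intro!: divide_left_mono mult_right_mono)
    with D False that show ?thesis
      by fastforce
  qed
  with \<open>C \<ge> 1\<close> show ?thesis
    unfolding equiv_on_def by (intro exI[of _ "max C D"]) auto
qed

lemma equiv_on_cong_left:
  assumes "equiv_on f g A" "\<And>t. t \<in> A \<Longrightarrow> f t = f' t"
  shows "equiv_on f' g A"
  using assms unfolding equiv_on_def by simp

lemma equiv_on_compose:
  assumes "equiv_on f g B" "\<And>t. t \<in> A \<Longrightarrow> \<phi> t \<in> B"
  shows "equiv_on (\<lambda>t. f (\<phi> t)) (\<lambda>t. g (\<phi> t)) A"
  using assms unfolding equiv_on_def by blast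

lemma equiv_on_quasi_monotone:
  assumes "equiv_on \<phi> p A" and mono: "\<And>u t. u \<in> A \<Longrightarrow> t \<in> A \<Longrightarrow> R u t \<Longrightarrow> p u \<le> p t"
  shows "\<exists>K\<ge>1. \<forall>u\<in>A. \<forall>t\<in>A. R u t \<longrightarrow> \<phi> u \<le> K * \<phi> t"
proof -
  obtain C where "C \<ge> 1" and C: "\<forall>t\<in>A. \<phi> t \<le> C * p t \<and> p t \<le> C * \<phi> t"
    using assms(1) unfolding equiv_on_iff_mult by blast
  have "\<phi> u \<le> (C * C) * \<phi> t" if "u \<in> A" "t \<in> A" "R u t" for u t
  proof -
    have "\<phi> u \<le> C * p u"
      using C that by blast
    also have "\<dots> \<le> C * p t"
      using mono that \<open>C \<ge> 1\<close> by simp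
    also have "\<dots> \<le> C * (C * \<phi> t)"
      using C that \<open>C \<ge> 1\<close> by simp
    finally show ?thesis
      by (simp add: ac_simps)
  qed
  moreover have "C * C \<ge> 1"
    using \<open>C \<ge> 1\<close> mult_mono[of 1 C 1 C] by simp
  ultimately show ?thesis
    by blast
qed

lemma equiv_on_Sup_envelope:
  fixes \<phi> :: "real \<Rightarrow> real"
  assumes "\<And>t. t \<in> A \<Longrightarrow> t \<in> S t" and bound: "\<And>t u. t \<in> A \<Longrightarrow> u \<in> S t \<Longrightarrow> \<phi> u \<le> K * \<phi> t"
    and "\<And>t. t \<in> A \<Longrightarrow> \<phi> t \<ge> 0"
  shows "equiv_on \<phi> (\<lambda>t. Sup (\<phi> ` S t)) A"
  unfolding equiv_on_iff_mult
proof (intro exI[of _ "max 1 K"] conjI ballI)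
  fix t assume "t \<in> A"
  have "\<phi> t \<le> Sup (\<phi> ` S t)"
    using assms \<open>t \<in> A\<close> by (intro cSUP_upper bdd_aboveI2[of _ _ "K * \<phi> t"]) auto
  moreover have "Sup (\<phi> ` S t) \<le> K * \<phi> t"
    using assms(1)[OF \<open>t \<in> A\<close>] bound[OF \<open>t \<in> A\<close>] by (intro cSUP_least) auto
  moreover have "1 * Sup (\<phi> ` S t) \<le> max 1 K * Sup (\<phi> ` S t)" "K * \<phi> t \<le> max 1 K * \<phi> t"
    using assms(3)[OF \<open>t \<in> A\<close>] calculation by (intro mult_right_mono; simp)+
  ultimately show "\<phi> t \<le> max 1 K * Sup (\<phi> ` S t)" "Sup (\<phi> ` S t) \<le> max 1 K * \<phi> t"
    by linarith+
qed simp

lemma slowly_varying_pos: "slowly_varying f \<Longrightarrow> t > 0 \<Longrightarrow> f t > 0"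
  unfolding slowly_varying_def by blast

lemma slowly_varying_measurable:
  "slowly_varying f \<Longrightarrow> f \<in> borel_measurable (restrict_space lborel {0<..})"
  unfolding slowly_varying_def by blast

definition potter_bounded_on :: "real set \<Rightarrow> real \<Rightarrow> (real \<Rightarrow> real) \<Rightarrow> bool" where
  "potter_bounded_on A \<epsilon> f \<longleftrightarrow> (\<exists>K\<ge>1. \<forall>s\<in>A. \<forall>t\<in>A. s \<le> t \<longrightarrow>
     f s \<le> K * (t / s) powr \<epsilon> * f t \<and> f t \<le> K * (t / s) powr \<epsilon> * f s)"

lemma potter_bounded_on_subset:
  "potter_bounded_on A \<epsilon> f \<Longrightarrow> B \<subseteq> A \<Longrightarrow> potter_bounded_on B \<epsilon> f"
  unfolding potter_bounded_on_def by blast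

lemma potter_bounded_on_inverse:
  assumes "potter_bounded_on {0<..} \<epsilon> f"
  shows "potter_bounded_on {0<..} \<epsilon> (\<lambda>t. f (1 / t))"
proof -
  obtain K where "K \<ge> 1" and K: "\<forall>s\<in>{0<..}. \<forall>t\<in>{0<..}. s \<le> t \<longrightarrow>
      f s \<le> K * (t / s) powr \<epsilon> * f t \<and> f t \<le> K * (t / s) powr \<epsilon> * f s"
    using assms unfolding potter_bounded_on_def by blast
  have "f (1 / s) \<le> K * (t / s) powr \<epsilon> * f (1 / t) \<and> f (1 / t) \<le> K * (t / s) powr \<epsilon> * f (1 / s)"
    if "0 < s" "s \<le> t" for s t
  proof -
    have "1 / t \<le> 1 / s" "(1 / s) / (1 / t) = t / s"
      using that by (simp_all add: frac_le)
    then show ?thesis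
      using K[rule_format, of "1 / t" "1 / s"] that by auto
  qed
  with \<open>K \<ge> 1\<close> show ?thesis
    unfolding potter_bounded_on_def by auto
qed

lemma potter_bounded_on_equiv:
  assumes "potter_bounded_on A \<epsilon> f" "equiv_on g f A"
  shows "potter_bounded_on A \<epsilon> g"
proof -
  obtain K where "K \<ge> 1" and K: "\<forall>s\<in>A. \<forall>t\<in>A. s \<le> t \<longrightarrow>
      f s \<le> K * (t / s) powr \<epsilon> * f t \<and> f t \<le> K * (t / s) powr \<epsilon> * f s"
    using assms(1) unfolding potter_bounded_on_def by blast
  obtain C where "C \<ge> 1" and C: "\<forall>t\<in>A. g t \<le> C * f t \<and> f t \<le> C * g t"
    using assms(2) unfolding equiv_on_iff_mult by blast
  have chain: "x \<le> C * C * K * r * w" if "x \<le> C * y" "y \<le> K * r * z" "z \<le> C * w" "r \<ge> 0"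
    for x y z w r
  proof -
    have "x \<le> C * (K * r * z)"
      using that mult_left_mono[OF that(2), of C] \<open>C \<ge> 1\<close> by linarith
    also have "\<dots> \<le> C * (K * r * (C * w))"
      using that \<open>C \<ge> 1\<close> \<open>K \<ge> 1\<close> by (intro mult_left_mono) auto
    finally show ?thesis
      by (simp add: ac_simps)
  qed
  show ?thesis
    unfolding potter_bounded_on_def
  proof (intro exI[of _ "C * C * K"] conjI ballI impI)
    fix s t assume "s \<in> A" "t \<in> A" "s \<le> t"
    then show "g s \<le> C * C * K * (t / s) powr \<epsilon> * g t" "g t \<le> C * C * K * (t / s) powr \<epsilon> * g s"
      using K C by (blast intro: chain powr_ge_zero)+
  qed (use \<open>C \<ge> 1\<close> \<open>K \<ge> 1\<close> mult_mono[of 1 C 1 C] mult_mono[of 1 "C * C" 1 K] in simp)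
qed

lemma le_mult_bound_weaken:
  fixes x y k K r :: real
  assumes "x \<le> k * r * y" "k \<le> K" "0 \<le> r" "0 \<le> y"
  shows "x \<le> K * r * y"
  using assms(1) by (rule order_trans) (use assms(2-) in \<open>intro mult_right_mono, simp_all\<close>)

lemma potter_bounded_on_glue:
  assumes low: "potter_bounded_on {0<..c} \<epsilon> f" and high: "potter_bounded_on {c..} \<epsilon> f"
    and "c > 0" and nonneg: "\<And>t. t > 0 \<Longrightarrow> f t \<ge> 0"
  shows "potter_bounded_on {0<..} \<epsilon> f"
proof -
  obtain K1 where "K1 \<ge> 1" and K1: "\<forall>s\<in>{0<..c}. \<forall>t\<in>{0<..c}. s \<le> t \<longrightarrow>
      f s \<le> K1 * (t / s) powr \<epsilon> * f t \<and> f t \<le> K1 * (t / s) powr \<epsilon> * f s"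
    using low unfolding potter_bounded_on_def by blast
  obtain K2 where "K2 \<ge> 1" and K2: "\<forall>s\<in>{c..}. \<forall>t\<in>{c..}. s \<le> t \<longrightarrow>
      f s \<le> K2 * (t / s) powr \<epsilon> * f t \<and> f t \<le> K2 * (t / s) powr \<epsilon> * f s"
    using high unfolding potter_bounded_on_def by blast
  define K where "K = (1 + K1) * (1 + K2)"
  have "K1 \<le> K" "K2 \<le> K" "K1 * K2 \<le> K"
    using \<open>K1 \<ge> 1\<close> \<open>K2 \<ge> 1\<close> by (simp_all add: K_def algebra_simps)
  have "\<exists>k\<le>K. f s \<le> k * (t / s) powr \<epsilon> * f t \<and> f t \<le> k * (t / s) powr \<epsilon> * f s"
    if "0 < s" "s \<le> t" for s t
  proof -
    consider "t \<le> c" | "c \<le> s" | "s < c" "c < t"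
      by linarith
    then show ?thesis
    proof cases
      case 1
      then show ?thesis
        using K1 that \<open>K1 \<le> K\<close> by (intro exI[of _ K1]) auto
    next
      case 2
      then show ?thesis
        using K2 that \<open>K2 \<le> K\<close> by (intro exI[of _ K2]) auto
    next
      case 3
      let ?l = "(c / s) powr \<epsilon>" and ?h = "(t / c) powr \<epsilon>"
      have split: "(t / s) powr \<epsilon> = ?l * ?h"
        using \<open>c > 0\<close> that by (simp add: powr_mult[symmetric])
      have sc: "f s \<le> K1 * ?l * f c" "f c \<le> K1 * ?l * f s"
        using K1[rule_format, of s c] that 3 by auto
      have ct: "f c \<le> K2 * ?h * f t" "f t \<le> K2 * ?h * f c"
        using K2[rule_format, of c t] that 3 by auto
      have "f s \<le> K1 * ?l * (K2 * ?h * f t)" "f t \<le> K2 * ?h * (K1 * ?l * f s)"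
        using \<open>K1 \<ge> 1\<close> \<open>K2 \<ge> 1\<close>
        by (intro order_trans[OF sc(1) mult_left_mono[OF ct(1)]] order_trans[OF ct(2) mult_left_mono[OF sc(2)]]; simp)+
      then show ?thesis
        using \<open>K1 * K2 \<le> K\<close> unfolding split by (intro exI[of _ "K1 * K2"]) (simp add: ac_simps)
    qed
  qed
  then have "f s \<le> K * (t / s) powr \<epsilon> * f t \<and> f t \<le> K * (t / s) powr \<epsilon> * f s"
    if "0 < s" "s \<le> t" for s t
    using that nonneg[of s] nonneg[of t] by (meson le_mult_bound_weaken order_less_le_trans powr_ge_zero)
  moreover have "K \<ge> 1"
    using \<open>K1 \<le> K\<close> \<open>K1 \<ge> 1\<close> by linarith
  ultimately show ?thesis
    unfolding potter_bounded_on_def by auto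
qed

lemma powr_weighted_le_iff:
  fixes a s t x y K :: real
  assumes "0 < s" "0 < t"
  shows "s powr a * x \<le> K * (t powr a * y) \<longleftrightarrow> x \<le> K * (t / s) powr a * y"
  using assms by (simp add: powr_divide pos_le_divide_eq ac_simps)

lemma slowly_varying_imp_potter_bounded:
  assumes sv: "slowly_varying f" and "\<epsilon> > 0"
  shows "potter_bounded_on {0<..} \<epsilon> f"
proof -
  obtain bp bm where bp: "mono_on {0<..} bp" "equiv_on (\<lambda>t. t powr \<epsilon> * f t) bp {0<..}"
    and bm: "antimono_on {0<..} bm" "equiv_on (\<lambda>t. t powr (-\<epsilon>) * f t) bm {0<..}"
    using assms unfolding slowly_varying_def by blast
  have "\<exists>K\<ge>1. \<forall>u\<in>{0<..}. \<forall>t\<in>{0<..}. u \<le> t \<longrightarrow> u powr \<epsilon> * f u \<le> K * (t powr \<epsilon> * f t)"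
    by (rule equiv_on_quasi_monotone[OF bp(2)]) (rule mono_onD[OF bp(1)])
  then obtain K1 where "K1 \<ge> 1"
    and K1: "\<And>s t. 0 < s \<Longrightarrow> s \<le> t \<Longrightarrow> f s \<le> K1 * (t / s) powr \<epsilon> * f t"
    by (metis greaterThan_iff order_less_le_trans powr_weighted_le_iff)
  have "\<exists>K\<ge>1. \<forall>u\<in>{0<..}. \<forall>t\<in>{0<..}. t \<le> u \<longrightarrow> u powr (-\<epsilon>) * f u \<le> K * (t powr (-\<epsilon>) * f t)"
  proof (rule equiv_on_quasi_monotone[OF bm(2)])
    fix u t :: real assume "u \<in> {0<..}" "t \<in> {0<..}" "t \<le> u"
    then show "bm u \<le> bm t"
      using monotone_onD[OF bm(1)] by blast
  qed
  then obtain K2 where "K2 \<ge> 1" and K2': "\<forall>u\<in>{0<..}. \<forall>t\<in>{0<..}. t \<le> u \<longrightarrow>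
      u powr (-\<epsilon>) * f u \<le> K2 * (t powr (-\<epsilon>) * f t)"
    by blast
  have K2: "f t \<le> K2 * (t / s) powr \<epsilon> * f s" if "0 < s" "s \<le> t" for s t
  proof -
    have "(s / t) powr (-\<epsilon>) = (t / s) powr \<epsilon>"
      using that by (simp add: powr_minus_divide powr_divide)
    then show ?thesis
      using K2'[rule_format, of t s] powr_weighted_le_iff[of t s "-\<epsilon>"] that by simp
  qed
  have "f s \<le> max K1 K2 * (t / s) powr \<epsilon> * f t \<and> f t \<le> max K1 K2 * (t / s) powr \<epsilon> * f s"
    if "0 < s" "s \<le> t" for s t
    using K1[OF that] K2[OF that] slowly_varying_pos[OF sv] that
    by (meson le_mult_bound_weaken max.cobounded1 max.cobounded2 order_less_le_trans less_imp_le powr_ge_zero)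
  moreover have "max K1 K2 \<ge> 1"
    using \<open>K1 \<ge> 1\<close> by linarith
  ultimately show ?thesis
    unfolding potter_bounded_on_def by auto
qed

lemma potter_bounded_imp_slowly_varying:
  assumes "f \<in> borel_measurable (restrict_space lborel {0<..})" and pos: "\<And>t. t > 0 \<Longrightarrow> f t > 0"
    and potter: "\<And>\<epsilon>. \<epsilon> > 0 \<Longrightarrow> potter_bounded_on {0<..} \<epsilon> f"
  shows "slowly_varying f"
  unfolding slowly_varying_def
proof (intro conjI allI impI assms)
  fix \<epsilon> :: real assume "\<epsilon> > 0"
  then obtain K where K: "\<forall>s\<in>{0<..}. \<forall>t\<in>{0<..}. s \<le> t \<longrightarrow>
      f s \<le> K * (t / s) powr \<epsilon> * f t \<and> f t \<le> K * (t / s) powr \<epsilon> * f s"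
    using potter unfolding potter_bounded_on_def by blast
  let ?up = "\<lambda>t. t powr \<epsilon> * f t" and ?down = "\<lambda>t. t powr (-\<epsilon>) * f t"
  have up: "?up u \<le> K * ?up t" if "0 < u" "u \<le> t" for u t
    using K[rule_format, of u t] that by (simp add: powr_divide field_simps)
  have down: "?down u \<le> K * ?down t" if "0 < t" "t \<le> u" for u t
    using K[rule_format, of t u] that by (simp add: powr_divide powr_minus field_simps)
  define bp where "bp t = Sup (?up ` {0<..t})" for t
  define bm where "bm t = Sup (?down ` {t..})" for t
  have "mono_on {0<..} bp"
    unfolding bp_def
    by (intro mono_onI cSUP_subset_mono bdd_aboveI2[of _ _ "K * ?up _"] up) auto
  moreover have "antimono_on {0<..} bm"
    unfolding bm_def
    by (intro monotone_onI cSUP_subset_mono bdd_aboveI2[of _ _ "K * ?down _"] down) auto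
  moreover have "equiv_on ?up bp {0<..}"
    unfolding bp_def by (rule equiv_on_Sup_envelope) (use up pos in \<open>auto intro: less_imp_le\<close>)
  moreover have "equiv_on ?down bm {0<..}"
    unfolding bm_def by (rule equiv_on_Sup_envelope) (use down pos in \<open>auto intro: less_imp_le\<close>)
  ultimately show "\<exists>bp bm. mono_on {0<..} bp \<and> antimono_on {0<..} bm \<and>
      equiv_on ?up bp {0<..} \<and> equiv_on ?down bm {0<..}"
    by blast
qed

lemma slowly_varying_bounded_near_0:
  assumes sv: "slowly_varying f" and lim: "(f \<longlongrightarrow> L) (at_right 0)" and "L > 0" and "a > 0"
  obtains m M where "m > 0" "\<And>t. 0 < t \<Longrightarrow> t \<le> a \<Longrightarrow> m \<le> f t \<and> f t \<le> M"
proof -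
  have "eventually (\<lambda>t. L / 2 < f t \<and> f t < 2 * L) (at_right 0)"
    using order_tendstoD[OF lim, of "L / 2"] order_tendstoD[OF lim, of "2 * L"] \<open>L > 0\<close>
    by (simp add: eventually_conj)
  then obtain d where "d > 0" and near: "\<And>t. 0 < t \<Longrightarrow> t < d \<Longrightarrow> L / 2 < f t \<and> f t < 2 * L"
    unfolding eventually_at_right_field by auto
  define c where "c = min (d / 2) a"
  have "0 < c" "c < d" "c \<le> a"
    using \<open>d > 0\<close> \<open>a > 0\<close> by (auto simp: c_def)
  then have fc: "L / 2 < f c" "f c < 2 * L"
    using near by auto
  obtain K where "K \<ge> 1" and K: "\<forall>s\<in>{0<..}. \<forall>t\<in>{0<..}. s \<le> t \<longrightarrow>
      f s \<le> K * (t / s) powr 1 * f t \<and> f t \<le> K * (t / s) powr 1 * f s"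
    using slowly_varying_imp_potter_bounded[OF sv, of 1] unfolding potter_bounded_on_def by auto
  have far: "f c \<le> K * (a / c) * f t \<and> f t \<le> K * (a / c) * f c" if "c \<le> t" "t \<le> a" for t
  proof -
    have ratio: "K * (t / c) \<le> K * (a / c)"
      using that \<open>c > 0\<close> \<open>K \<ge> 1\<close> by (simp add: divide_right_mono)
    have "f t > 0" "f c > 0"
      using slowly_varying_pos[OF sv] that \<open>c > 0\<close> by auto
    note mult_right_mono[OF ratio less_imp_le[OF \<open>f t > 0\<close>]] mult_right_mono[OF ratio less_imp_le[OF \<open>f c > 0\<close>]]
    moreover have "f c \<le> K * (t / c) * f t" "f t \<le> K * (t / c) * f c"
      using K[rule_format, of c t] that \<open>c > 0\<close> by auto
    ultimately show ?thesis
      by linarith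
  qed
  define q where "q = K * (a / c)"
  have "q > 0"
    using \<open>K \<ge> 1\<close> \<open>a > 0\<close> \<open>c > 0\<close> by (simp add: q_def)
  have "L / 2 / q > 0"
    using \<open>L > 0\<close> \<open>q > 0\<close> by simp
  moreover have "min (L / 2) (L / 2 / q) \<le> f t \<and> f t \<le> max (2 * L) (q * (2 * L))"
    if "0 < t" "t \<le> a" for t
  proof (cases "t < d")
    case True
    then show ?thesis
      using near that by fastforce
  next
    case False
    then have "f c \<le> q * f t" "f t \<le> q * f c"
      using far[OF _ \<open>t \<le> a\<close>] \<open>c < d\<close> unfolding q_def by auto
    moreover have "q * f c \<le> q * (2 * L)"
      using fc \<open>q > 0\<close> by simp
    ultimately have "L / 2 \<le> q * f t" "f t \<le> q * (2 * L)"
      using fc by linarith+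
    moreover from this(1) have "L / 2 / q \<le> f t"
      using \<open>q > 0\<close> by (simp add: pos_divide_le_eq ac_simps)
    ultimately show ?thesis
      by (simp add: min_le_iff_disj le_max_iff_disj)
  qed
  ultimately show ?thesis
    using that[of "min (L / 2) (L / 2 / q)" "max (2 * L) (q * (2 * L))"] \<open>L > 0\<close> by auto
qed

lemma slowly_varying_shift_equiv:
  assumes sv: "slowly_varying f" and "\<exists>L>0. (f \<longlongrightarrow> L) (at_right 0)"
  shows "equiv_on (\<lambda>x. f (x - 1)) f {1<..}"
proof -
  obtain m M where "m > 0" and bounded: "\<And>t. 0 < t \<Longrightarrow> t \<le> 2 \<Longrightarrow> m \<le> f t \<and> f t \<le> M"
    using assms slowly_varying_bounded_near_0[OF sv, of _ 2] by auto
  have "m \<le> M"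
    using bounded[of 1] by simp
  have near: "equiv_on (\<lambda>x. f (x - 1)) f {1<..2}"
    unfolding equiv_on_iff_mult
  proof (intro exI[of _ "M / m"] conjI ballI)
    show "1 \<le> M / m"
      using \<open>m > 0\<close> \<open>m \<le> M\<close> by simp
    fix x :: real assume "x \<in> {1<..2}"
    then have "m \<le> f x" "f x \<le> M" "m \<le> f (x - 1)" "f (x - 1) \<le> M"
      using bounded[of x] bounded[of "x - 1"] by auto
    then show "f (x - 1) \<le> M / m * f x" "f x \<le> M / m * f (x - 1)"
      using mult_left_mono[of m "f x" "M / m"] mult_left_mono[of m "f (x - 1)" "M / m"] \<open>m > 0\<close> \<open>m \<le> M\<close>
      by auto
  qed
  obtain K where "K \<ge> 1" and K: "\<forall>s\<in>{0<..}. \<forall>t\<in>{0<..}. s \<le> t \<longrightarrow>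
      f s \<le> K * (t / s) powr 1 * f t \<and> f t \<le> K * (t / s) powr 1 * f s"
    using slowly_varying_imp_potter_bounded[OF sv, of 1] unfolding potter_bounded_on_def by auto
  have far: "equiv_on (\<lambda>x. f (x - 1)) f {2<..}"
    unfolding equiv_on_iff_mult
  proof (intro exI[of _ "2 * K"] conjI ballI)
    show "1 \<le> 2 * K"
      using \<open>K \<ge> 1\<close> by simp
    fix x :: real assume "x \<in> {2<..}"
    then have "K * (x / (x - 1)) \<le> 2 * K"
      using \<open>K \<ge> 1\<close> by (simp add: field_simps)
    moreover have "f x > 0" "f (x - 1) > 0"
      using slowly_varying_pos[OF sv] \<open>x \<in> {2<..}\<close> by auto
    moreover have "f (x - 1) \<le> K * (x / (x - 1)) * f x" "f x \<le> K * (x / (x - 1)) * f (x - 1)"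
      using K[rule_format, of "x - 1" x] \<open>x \<in> {2<..}\<close> by auto
    ultimately show "f (x - 1) \<le> 2 * K * f x" "f x \<le> 2 * K * f (x - 1)"
      by (meson less_imp_le mult_right_mono order_trans)+
  qed
  have "\<forall>t\<in>{1<..2} \<union> {2<..}. f t \<ge> 0"
    using slowly_varying_pos[OF sv] by (auto intro: less_imp_le)
  moreover have "{1<..} = {1<..2} \<union> {2::real<..}"
    by auto
  ultimately show ?thesis
    using equiv_on_Un[OF near far] by simp
qed

lemma borel_measurable_inverse_shift_glue:
  fixes f h g :: "real \<Rightarrow> real"
  assumes "f \<in> borel_measurable (restrict_space lborel {0<..})"
    and "h \<in> borel_measurable (restrict_space lborel {0<..})"
    and g: "\<And>t. g t = (if t < 1 then h (1 / t - 1) else if t = 1 then c else f (t - 1))"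
  shows "g \<in> borel_measurable (restrict_space lborel {0<..})"
proof -
  have \<Omega>: "{0<..} \<inter> space lborel \<in> sets (lborel :: real measure)"
    by simp
  define F where "F x = indicator {0<..} x *\<^sub>R f x" for x :: real
  define H where "H x = indicator {0<..} x *\<^sub>R h x" for x :: real
  have [measurable]: "F \<in> borel_measurable borel" "H \<in> borel_measurable borel"
    using assms(1,2) unfolding F_def H_def borel_measurable_restrict_space_iff[OF \<Omega>] by simp_all
  have "(\<lambda>x. indicator {0<..} x *\<^sub>R (if x < 1 then H (1 / x - 1) else if x = 1 then c else F (x - 1)))
      \<in> borel_measurable borel"
    by measurable
  moreover have "(\<lambda>x. indicator {0<..} x *\<^sub>R g x) =
      (\<lambda>x. indicator {0<..} x *\<^sub>R (if x < 1 then H (1 / x - 1) else if x = 1 then c else F (x - 1)))"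
    by (auto simp: g F_def H_def indicator_def field_simps)
  ultimately show ?thesis
    unfolding borel_measurable_restrict_space_iff[OF \<Omega>] by simp
qed

lemma slowly_varying_glue:
  assumes sv_f: "slowly_varying f" and sv_h: "slowly_varying h"
    and meas: "g \<in> borel_measurable (restrict_space lborel {0<..})"
    and near_0: "equiv_on g (\<lambda>t. h (1 / t)) {0<..1}" and near_inf: "equiv_on g f {1..}"
  shows "slowly_varying g"
proof -
  have pos: "g t > 0" if "t > 0" for t
  proof (cases "t \<le> 1")
    case True
    then show ?thesis
      using equiv_on_pos[OF near_0] slowly_varying_pos[OF sv_h] that by simp
  next
    case False
    then show ?thesis
      using equiv_on_pos[OF near_inf] slowly_varying_pos[OF sv_f] by simp
  qed
  have "potter_bounded_on {0<..} \<epsilon> g" if "\<epsilon> > 0" for \<epsilon>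
  proof (rule potter_bounded_on_glue)
    have "potter_bounded_on {0<..1} \<epsilon> (\<lambda>t. h (1 / t))"
      using potter_bounded_on_inverse[OF slowly_varying_imp_potter_bounded[OF sv_h that]]
      by (rule potter_bounded_on_subset) auto
    then show "potter_bounded_on {0<..1} \<epsilon> g"
      using near_0 by (rule potter_bounded_on_equiv)
    have "potter_bounded_on {1..} \<epsilon> f"
      using slowly_varying_imp_potter_bounded[OF sv_f that] by (rule potter_bounded_on_subset) auto
    then show "potter_bounded_on {1..} \<epsilon> g"
      using near_inf by (rule potter_bounded_on_equiv)
  qed (use pos in \<open>auto intro: less_imp_le\<close>)
  then show ?thesis
    using potter_bounded_imp_slowly_varying[OF meas pos] by blast
qed

theorem lemma3p6:
  fixes b1 b2 b :: "real \<Rightarrow> real"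
  assumes sv1: "slowly_varying b1" and sv2: "slowly_varying b2"
    and lim1: "\<exists>L>0. (b1 \<longlongrightarrow> L) (at_right 0)"
    and lim2: "\<exists>L>0. (b2 \<longlongrightarrow> L) (at_right 0)"
    and b_def: "\<And>t. b t = (if t < 1 then b2 (1 / t - 1) else if t = 1 then 1 else b1 (t - 1))"
  shows "slowly_varying b \<and> equiv_on b (\<lambda>t. b2 (1 / t)) {0<..<1} \<and> equiv_on b b1 {1<..}"
proof -
  have pos1: "\<And>t. t > 0 \<Longrightarrow> b1 t > 0" and pos2: "\<And>t. t > 0 \<Longrightarrow> b2 t > 0"
    using sv1 sv2 by (simp_all add: slowly_varying_pos)
  have near_inf: "equiv_on b b1 {1<..}"
    by (rule equiv_on_cong_left[OF slowly_varying_shift_equiv[OF sv1 lim1]]) (simp add: b_def)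
  have "equiv_on (\<lambda>t. b2 (1 / t - 1)) (\<lambda>t. b2 (1 / t)) {0<..<1}"
    by (rule equiv_on_compose[OF slowly_varying_shift_equiv[OF sv2 lim2]]) simp
  then have near_0: "equiv_on b (\<lambda>t. b2 (1 / t)) {0<..<1}"
    by (rule equiv_on_cong_left) (simp add: b_def)
  have at_1: "equiv_on b (\<lambda>t. b2 (1 / t)) {1}" "equiv_on b b1 {1}"
    using pos1 pos2 by (simp_all add: equiv_on_singleton b_def)
  have "equiv_on b (\<lambda>t. b2 (1 / t)) ({0<..<1} \<union> {1})"
    by (rule equiv_on_Un[OF near_0 at_1(1)]) (use pos2 in \<open>auto intro: less_imp_le\<close>)
  moreover have "equiv_on b b1 ({1} \<union> {1<..})"
    by (rule equiv_on_Un[OF at_1(2) near_inf]) (use pos1 in \<open>auto intro: less_imp_le\<close>)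
  moreover have "{0<..<1} \<union> {1} = {0<..1::real}" "{1} \<union> {1<..} = {1::real..}"
    by auto
  moreover have "b \<in> borel_measurable (restrict_space lborel {0<..})"
    using slowly_varying_measurable[OF sv1] slowly_varying_measurable[OF sv2] b_def
    by (rule borel_measurable_inverse_shift_glue)
  ultimately have "slowly_varying b"
    using slowly_varying_glue[OF sv1 sv2] by simp
  with near_0 near_inf show ?thesis
    by blast
qed

end
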